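(* If $a>b\geq c>d>0$, then $$\frac{L(a,b)}{L(c,d)}>1+\ln\frac{G(a,b)}{G(c,d)}>\frac{2ab}{ab+cd} \qquad\text{and}\qquad \frac{L(a,b)}{L(c,d)}>\frac{\ln\frac{G(a,b)}{G(c,d)}}{\ln\frac{I(a,b)}{I(c,d)}}.$$ In particular, if $a>b>0$, then $$\frac{L(a,b)}{b}>1+\frac{1}{2}\ln\frac{a}{b}>\frac{2a}{a+b}>\frac{\ln\frac{a}{b}}{2\ln\frac{I(a,b)}{b}}.$$
   Context: For $u,v>0$: $G(u,v)=\sqrt{uv}$; the logarithmic mean is $L(u,v)=\frac{u-v}{\ln u-\ln v}$ if $u\neq v$ and $L(u,u)=u$; the identric mean is $I(u,v)=\frac{1}{e}\left(\frac{u^u}{v^v}\right)^{1/(u-v)}$ if $u\neq v$ and $I(u,u)=u$. *)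

theory Defs
  imports Complex_Main
begin

definition G_mean :: "real \<Rightarrow> real \<Rightarrow> real" where
  "G_mean u v = sqrt (u * v)"

definition L_mean :: "real \<Rightarrow> real \<Rightarrow> real" where
  "L_mean u v = (if u \<noteq> v then (u - v) / (ln u - ln v) else u)"

definition I_mean :: "real \<Rightarrow> real \<Rightarrow> real" where
  "I_mean u v = (if u \<noteq> v
      then (1 / exp 1) * ((u powr u) / (v powr v)) powr (1 / (u - v))
      else u)"

end

theory Submission
  imports Defs
begin

text \<open>
  By homogeneity, for p > q > 0 the ratios G/L and I/G depend only on u = sqrt(p/q):
  G/L = 2 u ln u / (u^2 - 1) and ln (I/G) = (u^2 + 1) ln u / (u^2 - 1) - 1.
  Put E = G(a,b)/G(c,d) and u = sqrt(c/d). Then E > u because G(a,b) > b \<ge> c,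
  L(a,b)/L(c,d) > E \<cdot> G(c,d)/L(c,d) because L > G, and
  ln (I(a,b)/I(c,d)) \<ge> ln E - ln (I(c,d)/G(c,d)) because I > G. This reduces all three
  inequalities to one-variable inequalities in E \<ge> u, which follow from the classical
  bounds 2(x-1)/(x+1) < ln x < (x - 1/x)/2 for x > 1 and exp y > 1 + y + y^2/2 for y > 0.
  The second chain is a direct computation in v = a/b using the same bounds.
\<close>

lemma two_ln_less_diff_inverse:
  fixes x :: real assumes "1 < x" shows "2 * ln x < x - 1 / x"
proof -
  let ?f = "\<lambda>t::real. t - 1 / t - 2 * ln t"
  have "?f 1 < ?f x"
  proof (rule DERIV_pos_imp_increasing_open[OF assms])
    fix t :: real assume t: "1 < t" "t < x"
    have "DERIV ?f t :> 1 + 1 / t^2 - 2 / t"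
      using t by (auto intro!: derivative_eq_intros simp: power2_eq_square field_simps)
    moreover have "1 + 1 / t^2 - 2 / t = (1 - 1 / t)^2"
      using t by (simp add: power2_eq_square field_simps)
    ultimately show "\<exists>y. DERIV ?f t :> y \<and> 0 < y" using t by auto
  qed (intro continuous_intros; auto)
  then show ?thesis by simp
qed

lemma two_mult_diff_div_add_less_ln:
  fixes x :: real assumes "1 < x" shows "2 * (x - 1) / (x + 1) < ln x"
proof -
  let ?f = "\<lambda>t::real. ln t - 2 * (t - 1) / (t + 1)"
  have "?f 1 < ?f x"
  proof (rule DERIV_pos_imp_increasing_open[OF assms])
    fix t :: real assume t: "1 < t" "t < x"
    have "DERIV ?f t :> 1 / t - 4 / (t + 1)^2"
      using t by (auto intro!: derivative_eq_intros simp: power2_eq_square field_simps)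
    moreover have "1 / t - 4 / (t + 1)^2 = (t - 1)^2 / (t * (t + 1)^2)"
      using t by (simp add: power2_eq_square divide_simps) (simp add: algebra_simps)
    ultimately show "\<exists>y. DERIV ?f t :> y \<and> 0 < y" using t by auto
  qed (intro continuous_intros; auto)
  then show ?thesis by simp
qed

lemma exp_gt_quadratic:
  fixes y :: real assumes "0 < y" shows "1 + y + y^2 / 2 < exp y"
proof -
  have "(1 + y/2 + (y/2)^2 / 2)^2 = 1 + y + y^2 / 2 + y^3 / 8 + y^4 / 64"
    by (simp add: power2_eq_square power3_eq_cube power4_eq_xxxx field_simps)
  then have "1 + y + y^2 / 2 < (1 + y/2 + (y/2)^2 / 2)^2"
    using assms by (simp add: add_pos_pos)
  also have "\<dots> \<le> exp (y/2) ^ 2"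
    using assms by (intro power_mono exp_lower_Taylor_quadratic) auto
  also have "\<dots> = exp y"
    by (simp add: exp_double[symmetric])
  finally show ?thesis .
qed

lemma two_mult_div_add_one_less_one_add_half_ln:
  fixes v :: real assumes "1 < v" shows "2 * v / (v + 1) < 1 + ln v / 2"
proof -
  have "2 * v / (v + 1) = 1 + (v - 1) / (v + 1)"
    using assms by (simp add: field_simps)
  also have "\<dots> < 1 + ln v / 2"
    using two_mult_diff_div_add_less_ln[OF assms] by (simp add: field_simps)
  finally show ?thesis .
qed

lemma one_add_half_ln_less_diff_div_ln:
  fixes v :: real assumes "1 < v" shows "1 + ln v / 2 < (v - 1) / ln v"
proof -
  have l: "0 < ln v" using assms by simp
  have "1 + ln v + (ln v)^2 / 2 < exp (ln v)"
    using l by (rule exp_gt_quadratic)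
  then have "ln v * (1 + ln v / 2) < v - 1"
    using assms by (simp add: power2_eq_square algebra_simps)
  then show ?thesis
    using l by (simp add: field_simps)
qed

lemma ln_div_less_two_mult_div_add_one:
  fixes v :: real assumes v: "1 < v"
  shows "ln v / (2 * (v * ln v / (v - 1) - 1)) < 2 * v / (v + 1)"
proof -
  define l where "l = ln v"
  define X where "X = v * l / (v - 1) - 1"
  have l_gt: "2 * (v - 1) / (v + 1) < l"
    unfolding l_def using v by (rule two_mult_diff_div_add_less_ln)
  have "(v - 1) / v \<le> 2 * (v - 1) / (v + 1)"
    using v zero_le_power2[of "v - 1"] by (simp add: field_simps power2_eq_square algebra_simps)
  with l_gt have "(v - 1) / v < l"
    by linarith
  then have "v - 1 < v * l"
    using v by (simp add: field_simps)
  then have X_pos: "0 < X"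
    unfolding X_def using v by (simp add: field_simps)
  have "(3 * v^2 + 1) * (2 * (v - 1) / (v + 1)) - 4 * v * (v - 1) = 2 * (v - 1)^3 / (v + 1)"
    using v by (simp add: field_simps power2_eq_square power3_eq_cube)
  moreover have "0 \<le> 2 * (v - 1)^3 / (v + 1)"
    using v by simp
  ultimately have "4 * v * (v - 1) \<le> (3 * v^2 + 1) * (2 * (v - 1) / (v + 1))"
    by linarith
  also have "\<dots> < (3 * v^2 + 1) * l"
    using l_gt by (intro mult_strict_left_mono) (auto intro: add_nonneg_pos)
  finally have "l * (v + 1) < 4 * v * X"
    unfolding X_def using v by (simp add: field_simps power2_eq_square)
  then show ?thesis
    using X_pos v unfolding l_def[symmetric] X_def[symmetric]
    by (simp add: field_simps)
qed

definition gl_ratio :: "real \<Rightarrow> real" where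
  "gl_ratio u = 2 * u * ln u / (u^2 - 1)"

definition ig_log_ratio :: "real \<Rightarrow> real" where
  "ig_log_ratio u = (u^2 + 1) * ln u / (u^2 - 1) - 1"

lemma gl_ratio_pos:
  fixes u :: real assumes "1 < u" shows "0 < gl_ratio u"
  unfolding gl_ratio_def using assms by simp

lemma mult_gl_ratio_eq:
  fixes u :: real assumes "1 < u" shows "u * gl_ratio u = 1 + ln u + ig_log_ratio u"
proof -
  have "1 < u^2" using assms by simp
  then have "u^2 - 1 \<noteq> 0" by simp
  then show ?thesis
    unfolding gl_ratio_def ig_log_ratio_def by (simp add: field_simps power2_eq_square)
qed

lemma ig_log_ratio_pos:
  fixes u :: real assumes u: "1 < u" shows "0 < ig_log_ratio u"
proof -
  have u2: "1 < u^2" using u by simp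
  have "2 * (u^2 - 1) / (u^2 + 1) < 2 * ln u"
    using two_mult_diff_div_add_less_ln[OF u2] u by (simp add: ln_realpow)
  moreover have "0 < u^2 + 1" using u2 by simp
  ultimately have "u^2 - 1 < (u^2 + 1) * ln u"
    by (simp add: pos_divide_less_eq mult.commute)
  then show ?thesis
    unfolding ig_log_ratio_def using u2 by (simp add: field_simps)
qed

lemma ig_log_ratio_le_ln:
  fixes u :: real assumes u: "1 < u" shows "ig_log_ratio u \<le> ln u"
proof -
  have u2: "1 < u^2" using u by simp
  have "2 * ln u \<le> u^2 - 1"
    using ln_le_minus_one[of "u^2"] u by (simp add: ln_realpow)
  then have "2 * ln u / (u^2 - 1) \<le> 1"
    using u2 by simp
  moreover have "ln u - ig_log_ratio u = 1 - 2 * ln u / (u^2 - 1)"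
    unfolding ig_log_ratio_def using u2 by (simp add: field_simps)
  ultimately show ?thesis
    by linarith
qed

lemma gl_ratio_less_one:
  fixes u :: real assumes u: "1 < u" shows "gl_ratio u < 1"
proof -
  have "2 * ln u * u < (u - 1 / u) * u"
    using two_ln_less_diff_inverse[OF u] u by (intro mult_strict_right_mono) auto
  then have "2 * u * ln u < u^2 - 1"
    using u by (simp add: algebra_simps power2_eq_square)
  then show ?thesis
    unfolding gl_ratio_def using u by simp
qed

lemma one_add_ln_le_mult_gl_ratio:
  fixes u E :: real assumes u: "1 < u" and E: "u \<le> E"
  shows "1 + ln E \<le> E * gl_ratio u"
proof -
  define k where "k = gl_ratio u"
  have uk: "u * k = 1 + ln u + ig_log_ratio u"
    unfolding k_def using u by (rule mult_gl_ratio_eq)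
  have "ln (E / u) \<le> E / u - 1"
    using u E by (intro ln_le_minus_one) simp
  then have "1 + ln E \<le> ln u + E / u"
    using u E by (simp add: ln_div)
  also have "\<dots> \<le> u * k - 1 + E / u"
    using uk ig_log_ratio_pos[OF u] by simp
  also have "\<dots> \<le> E * k"
  proof -
    have "1 / u \<le> k"
      using uk ig_log_ratio_pos[OF u] u by (simp add: field_simps)
    then have "(E - u) * (1 / u) \<le> (E - u) * k"
      using E by (intro mult_left_mono) auto
    then show ?thesis
      using u by (simp add: field_simps)
  qed
  finally show ?thesis unfolding k_def .
qed

lemma ln_le_mult_gl_ratio_mult_diff_ig_log_ratio_self:
  fixes u :: real assumes u: "1 < u"
  shows "ln u \<le> u * gl_ratio u * (ln u - ig_log_ratio u)"
proof -
  define s where "s = ln u"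
  define D where "D = u^2 - 1"
  have u2: "1 < u^2" using u by simp
  have D: "0 < D" unfolding D_def using u2 by simp
  have s: "0 < s" unfolding s_def using u by simp
  have "2 * ln (u^2) < u^2 - 1 / u^2"
    using two_ln_less_diff_inverse[OF u2] .
  then have "4 * s * u^2 < (u^2 - 1 / u^2) * u^2"
    unfolding s_def using u by (intro mult_strict_right_mono) (auto simp: ln_realpow)
  moreover have "(u^2 - 1 / u^2) * u^2 = D^2 + 2 * D"
    unfolding D_def using u by (simp add: field_simps power2_eq_square)
  ultimately have "D^2 \<le> 2 * u^2 * (D - 2 * s)"
    unfolding D_def by (simp add: algebra_simps power2_eq_square)
  then have "s * 1 \<le> s * (2 * u^2 * (D - 2 * s) / D^2)"
    using s D by (intro mult_left_mono) auto
  also have "\<dots> = u * gl_ratio u * (s - ig_log_ratio u)"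
    unfolding gl_ratio_def ig_log_ratio_def s_def[symmetric] D_def[symmetric]
    using D by (simp add: field_simps power2_eq_square) (use D_def in algebra)
  finally show ?thesis
    unfolding s_def by simp
qed

lemma ln_le_mult_gl_ratio_mult_diff_ig_log_ratio:
  fixes u E :: real assumes u: "1 < u" and E: "u \<le> E"
  shows "ln E \<le> E * gl_ratio u * (ln E - ig_log_ratio u)"
proof -
  define k where "k = gl_ratio u"
  define d where "d = ln u - ig_log_ratio u"
  define t where "t = ln (E / u)"
  have d: "0 \<le> d" unfolding d_def using ig_log_ratio_le_ln[OF u] by simp
  have t: "0 \<le> t" unfolding t_def using u E by simp
  have uk: "1 \<le> u * k"
    unfolding k_def using mult_gl_ratio_eq[OF u] ig_log_ratio_pos[OF u] u by simp
  have k: "0 \<le> k" unfolding k_def using gl_ratio_pos[OF u] by simp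
  have lnE: "ln E = ln u + t" unfolding t_def using u E by (simp add: ln_div)
  have "ln E \<le> u * k * d + t"
    using ln_le_mult_gl_ratio_mult_diff_ig_log_ratio_self[OF u] lnE
    unfolding k_def d_def by simp
  also have "\<dots> \<le> u * k * d + u * k * t + u * k * t * (d + t)"
  proof -
    have "t \<le> u * k * t" using uk t by (simp add: mult_le_cancel_right1)
    moreover have "0 \<le> u * k * t * (d + t)" using uk t d by simp
    ultimately show ?thesis by linarith
  qed
  also have "\<dots> = u * (1 + t) * k * (d + t)"
    by (simp add: algebra_simps)
  also have "\<dots> \<le> E * k * (d + t)"
  proof -
    have "u * (1 + t) \<le> u * exp t"
      using u by (simp add: exp_ge_add_one_self)
    also have "\<dots> = E" unfolding t_def using u E by simp
    finally show ?thesis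
      using k d t by (intro mult_right_mono) auto
  qed
  finally show ?thesis
    unfolding k_def d_def lnE by (simp add: algebra_simps)
qed

lemma ln_div_less_of_mult_gl_ratio_less:
  fixes u E R J :: real
  assumes u: "1 < u" and Eu: "u < E" and ER: "E * gl_ratio u < R"
    and IJ: "ln E - ig_log_ratio u \<le> J"
  shows "ln E / J < R"
proof -
  have core: "ln E \<le> E * gl_ratio u * (ln E - ig_log_ratio u)"
    using Eu u by (intro ln_le_mult_gl_ratio_mult_diff_ig_log_ratio) auto
  have Ek: "0 < E * gl_ratio u"
    using u Eu gl_ratio_pos[OF u] by simp
  have "0 < E * gl_ratio u * (ln E - ig_log_ratio u)"
    using core u Eu ln_gt_zero[of E] by linarith
  then have "0 < ln E - ig_log_ratio u"
    using Ek by (simp add: zero_less_mult_iff)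
  with IJ have J: "0 < J" by linarith
  note core
  also have "E * gl_ratio u * (ln E - ig_log_ratio u) \<le> E * gl_ratio u * J"
    using Ek IJ by (intro mult_left_mono) auto
  also have "\<dots> < R * J"
    using ER J by (rule mult_strict_right_mono)
  finally show ?thesis
    using J by (simp add: divide_less_eq)
qed

lemma I_mean_pos:
  fixes p q :: real assumes "0 < p" "0 < q" shows "0 < I_mean p q"
  using assms unfolding I_mean_def by auto

lemma L_mean_pos:
  fixes p q :: real assumes "0 < q" "q < p" shows "0 < L_mean p q"
  using assms unfolding L_mean_def by (simp add: divide_pos_pos)

lemma G_mean_scaled:
  fixes u q :: real assumes "0 \<le> u" "0 \<le> q" shows "G_mean (u^2 * q) q = u * q"
proof -
  have "u^2 * q * q = (u * q)^2" by (simp add: power2_eq_square)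
  then show ?thesis unfolding G_mean_def using assms by simp
qed

lemma L_mean_scaled:
  fixes t q :: real assumes t: "1 < t" and q: "0 < q"
  shows "L_mean (t * q) q = (t - 1) * q / ln t"
proof -
  have "t * q \<noteq> q" using t q by simp
  moreover have "ln (t * q) - ln q = ln t" using t q by (simp add: ln_mult)
  ultimately show ?thesis unfolding L_mean_def by (simp add: algebra_simps)
qed

lemma ln_I_mean_scaled:
  fixes t q :: real assumes t: "1 < t" and q: "0 < q"
  shows "ln (I_mean (t * q) q) = t * ln t / (t - 1) + ln q - 1"
proof -
  define p where "p = t * q"
  have p: "0 < p" "p \<noteq> q" unfolding p_def using t q by auto
  have "ln (I_mean p q) = (p * ln p - q * ln q) / (p - q) - 1"
    using p q unfolding I_mean_def by (simp add: ln_div ln_mult ln_powr)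
  also have "p * ln p - q * ln q = (t - 1) * q * (t * ln t / (t - 1) + ln q)"
    unfolding p_def using t q by (simp add: ln_mult field_simps)
  also have "p - q = (t - 1) * q"
    unfolding p_def by (simp add: algebra_simps)
  finally show ?thesis
    unfolding p_def using t q by simp
qed

lemma G_mean_div_L_mean:
  fixes p q :: real assumes q: "0 < q" and pq: "q < p"
  shows "G_mean p q / L_mean p q = gl_ratio (sqrt (p / q))"
proof -
  define u where "u = sqrt (p / q)"
  have u: "1 < u" unfolding u_def using q pq by simp
  have p: "p = u^2 * q" unfolding u_def using q pq by simp
  have L: "L_mean p q = (u^2 - 1) * q / (2 * ln u)"
    unfolding p using L_mean_scaled[of "u^2" q] u q by (simp add: ln_realpow)
  have G: "G_mean p q = u * q"
    unfolding p using u q by (simp add: G_mean_scaled)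
  have "0 < u^2 - 1" using u by simp
  then show ?thesis
    unfolding L G u_def[symmetric] gl_ratio_def using u q by (simp add: divide_simps)
qed

lemma ln_I_mean_div_G_mean:
  fixes p q :: real assumes q: "0 < q" and pq: "q < p"
  shows "ln (I_mean p q / G_mean p q) = ig_log_ratio (sqrt (p / q))"
proof -
  define u where "u = sqrt (p / q)"
  have u: "1 < u" unfolding u_def using q pq by simp
  have p: "p = u^2 * q" unfolding u_def using q pq by simp
  have u2: "1 < u^2" using u by simp
  have "ln (I_mean p q) = 2 * u^2 * ln u / (u^2 - 1) + ln q - 1"
    unfolding p using ln_I_mean_scaled[OF u2 q] u by (simp add: ln_realpow)
  moreover have "ln (G_mean p q) = ln u + ln q"
    unfolding p using u q by (simp add: G_mean_scaled ln_mult)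
  moreover have "0 < I_mean p q" "0 < G_mean p q"
    using I_mean_pos[of p q] p q u by (auto simp: G_mean_scaled)
  ultimately show ?thesis
    unfolding u_def[symmetric] ig_log_ratio_def using u2 by (simp add: ln_div field_simps)
qed

lemma G_mean_less_L_mean:
  fixes p q :: real assumes "0 < q" "q < p" shows "G_mean p q < L_mean p q"
proof -
  have "G_mean p q / L_mean p q < 1"
    using assms gl_ratio_less_one[of "sqrt (p / q)"] by (simp add: G_mean_div_L_mean)
  then show ?thesis
    using L_mean_pos[OF assms] by simp
qed

lemma sqrt_div_less_G_mean_ratio:
  fixes a b c d :: real assumes "0 < d" "d < c" "c \<le> b" "b < a"
  shows "sqrt (c / d) < G_mean a b / G_mean c d"
proof -
  have "sqrt (c / d) * G_mean c d = c"
    unfolding G_mean_def using assms by (simp add: real_sqrt_mult[symmetric])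
  also have "c < G_mean a b"
    unfolding G_mean_def using assms real_sqrt_less_mono[of "b * b" "a * b"] by simp
  finally show ?thesis
    unfolding G_mean_def using assms by (simp add: pos_less_divide_eq)
qed

lemma ln_I_mean_ratio_eq:
  fixes a b c d :: real assumes "0 < d" "d < c" "0 < b" "b < a"
  shows "ln (I_mean a b / I_mean c d)
    = ln (G_mean a b / G_mean c d) + ig_log_ratio (sqrt (a / b)) - ig_log_ratio (sqrt (c / d))"
  using assms ln_I_mean_div_G_mean[of b a] ln_I_mean_div_G_mean[of d c]
    I_mean_pos[of a b] I_mean_pos[of c d]
  by (simp add: G_mean_def ln_div)

lemma L_mean_ratio_bounds:
  fixes a b c d :: real assumes "0 < d" "d < c" "c \<le> b" "b < a"
  shows "L_mean a b / L_mean c d > 1 + ln (G_mean a b / G_mean c d)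
    \<and> 1 + ln (G_mean a b / G_mean c d) > 2 * a * b / (a * b + c * d)
    \<and> L_mean a b / L_mean c d > ln (G_mean a b / G_mean c d) / ln (I_mean a b / I_mean c d)"
proof -
  define u where "u = sqrt (c / d)"
  define E where "E = G_mean a b / G_mean c d"
  define R where "R = L_mean a b / L_mean c d"
  define J where "J = ln (I_mean a b / I_mean c d)"
  have u: "1 < u" unfolding u_def using assms by simp
  have Eu: "u < E" unfolding u_def E_def using assms by (rule sqrt_div_less_G_mean_ratio)
  have E: "1 < E" using u Eu by simp
  have "gl_ratio u = G_mean c d / L_mean c d"
    unfolding u_def using assms by (simp add: G_mean_div_L_mean)
  moreover have "0 < G_mean c d" unfolding G_mean_def using assms by simp
  ultimately have "E * gl_ratio u = G_mean a b / L_mean c d"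
    unfolding E_def by simp
  also have "\<dots> < R"
    unfolding R_def using assms G_mean_less_L_mean[of b a] L_mean_pos[of d c]
    by (simp add: divide_strict_right_mono)
  finally have ER: "E * gl_ratio u < R" .
  have "1 + ln E < R"
    using one_add_ln_le_mult_gl_ratio[OF u, of E] Eu ER by simp
  moreover have "2 * a * b / (a * b + c * d) < 1 + ln E"
  proof -
    have ab: "a * b = E^2 * (c * d)"
      unfolding E_def G_mean_def using assms by (simp add: field_simps power2_eq_square)
    have "2 * a * b / (a * b + c * d) = (c * d) * (2 * E^2) / ((c * d) * (E^2 + 1))"
      unfolding mult.assoc ab by (simp add: algebra_simps)
    also have "\<dots> = 2 * E^2 / (E^2 + 1)"
      using assms by simp
    also have "\<dots> < 1 + ln (E^2) / 2"
      using E by (intro two_mult_div_add_one_less_one_add_half_ln) simp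
    finally show ?thesis
      using E by (simp add: ln_realpow)
  qed
  moreover have "ln E - ig_log_ratio u \<le> J"
    unfolding J_def E_def u_def using assms ln_I_mean_ratio_eq[of d c b a]
      ig_log_ratio_pos[of "sqrt (a / b)"] by simp
  then have "ln E / J < R"
    by (rule ln_div_less_of_mult_gl_ratio_less[OF u Eu ER])
  ultimately show ?thesis
    unfolding E_def R_def J_def by simp
qed

lemma L_mean_div_bounds:
  fixes a b :: real assumes b: "0 < b" and ab: "b < a"
  shows "L_mean a b / b > 1 + (1/2) * ln (a / b)
    \<and> 1 + (1/2) * ln (a / b) > 2 * a / (a + b)
    \<and> 2 * a / (a + b) > ln (a / b) / (2 * ln (I_mean a b / b))"
proof -
  define v where "v = a / b"
  have v: "1 < v" unfolding v_def using b ab by simp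
  have a: "a = v * b" unfolding v_def using b by simp
  have "L_mean a b / b = (v - 1) / ln v"
    unfolding a using L_mean_scaled[OF v b] b by simp
  moreover have "ln (I_mean a b / b) = v * ln v / (v - 1) - 1"
    unfolding a using ln_I_mean_scaled[OF v b] I_mean_pos[of "v * b" b] v b by (simp add: ln_div)
  moreover have "2 * a / (a + b) = b * (2 * v) / (b * (v + 1))"
    unfolding a by (simp add: algebra_simps)
  moreover have "\<dots> = 2 * v / (v + 1)"
    using b by simp
  ultimately show ?thesis
    unfolding v_def[symmetric]
    using one_add_half_ln_less_diff_div_ln[OF v] two_mult_div_add_one_less_one_add_half_ln[OF v]
      ln_div_less_two_mult_div_add_one[OF v]
    by simp
qed

theorem theorem3p2:
  shows "(\<forall>a b c d :: real. a > b \<and> b \<ge> c \<and> c > d \<and> d > 0 \<longrightarrow>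
            L_mean a b / L_mean c d > 1 + ln (G_mean a b / G_mean c d)
          \<and> 1 + ln (G_mean a b / G_mean c d) > 2 * a * b / (a * b + c * d)
          \<and> L_mean a b / L_mean c d >
              ln (G_mean a b / G_mean c d) / ln (I_mean a b / I_mean c d))
       \<and> (\<forall>a b :: real. a > b \<and> b > 0 \<longrightarrow>
            L_mean a b / b > 1 + (1/2) * ln (a / b)
          \<and> 1 + (1/2) * ln (a / b) > 2 * a / (a + b)
          \<and> 2 * a / (a + b) > ln (a / b) / (2 * ln (I_mean a b / b)))"
  using L_mean_ratio_bounds L_mean_div_bounds by blast

end
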